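(* Consider single-item $s$-unit auctions with $n$ bidders, and valuation profiles $\vec v_1,\dots,\vec v_T\in[0,1]^n$ chosen in advance by an adversary. Let $m=\lceil\sqrt T\rceil$ and run Generalized FTPL over learner actions $\mathcal I_m$ with payoff $f(\vec r,\vec v)=\mathrm{Rev}(\vec r,\vec v)/s\in[0,1]$, translation matrix $\Gamma^{\mathrm{VCG}}$, accuracy $\epsilon=1/\sqrt T$, and $D$ uniform on $[0,1/\eta]$ with $\eta=\sqrt{1/(2(1+2\epsilon)T)}$. Then the auctions $\vec r_1,\dots,\vec r_T$ played satisfy \[ \mathbb E\Big[\max_{\vec r\in\mathcal I}\sum_{t=1}^T\mathrm{Rev}(\vec r,\vec v_t)-\sum_{t=1}^T\mathrm{Rev}(\vec r_t,\vec v_t)\Big]\le O\big(ns\log(T)\sqrt T\big). \]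
   Context: $s$-unit setting: the feasible sets of served bidders are all subsets of $[n]$ of size at most $s$. A VCG auction with bidder-specific reserves $\vec r$: bidders with $v_i<r_i$ are removed; if none remain nothing is allocated; otherwise a welfare-maximizing feasible set among remaining bidders is served and each served bidder pays the larger of $r_i$ and his VCG payment; $\mathrm{Rev}(\vec r,\vec v)\le s$ is the total payment. $\mathcal I$: all such auctions with $\vec r\in[0,1]^n$; $\mathcal I_m$: those with all $r_i\in\{1/m,\dots,m/m\}$. $\Gamma^{\mathrm{VCG}}$: binary matrix with rows indexed by $\vec r\in\mathcal I_m$ and $n\lceil\log_2 m\rceil$ columns, entry in column $(i-1)\lceil\log_2m\rceil+\beta$ being the $\beta$-th bit of the integer $mr_i$. Generalized FTPL with $(\Gamma,D,\epsilon)$: draw $\alpha_1,\dots,\alpha_N$ i.i.d. from $D$ once; at round $t$ play any $x_t$ with $\sum_{\tau<t}f(x_t,y_\tau)+\vec\alpha\cdot\Gamma_{x_t}\ge\sum_{\tau<t}f(x,y_\tau)+\vec\alpha\cdot\Gamma_x-\epsilon$ for all learner actions $x$, where $y_\tau=\vec v_\tau$. *)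

theory Defs
  imports "HOL-Probability.Probability"
begin

(* Bidders are indexed 0,...,n-1; reserve vectors and valuation profiles are
   functions nat => real (entries at indices >= n are irrelevant / fixed to 0). *)

definition opt_welfare :: "nat \<Rightarrow> (nat \<Rightarrow> real) \<Rightarrow> nat set \<Rightarrow> real" where
  "opt_welfare s v A = Max ((\<lambda>B. \<Sum>i\<in>B. v i) ` {B. B \<subseteq> A \<and> card B \<le> s})"

definition remaining :: "nat \<Rightarrow> (nat \<Rightarrow> real) \<Rightarrow> (nat \<Rightarrow> real) \<Rightarrow> nat set" where
  "remaining n r v = {i. i < n \<and> r i \<le> v i}"

definition served :: "nat \<Rightarrow> nat \<Rightarrow> (nat \<Rightarrow> real) \<Rightarrow> (nat \<Rightarrow> real) \<Rightarrow> nat set" where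
  "served s n r v = (SOME S. S \<subseteq> remaining n r v \<and> card S \<le> s \<and>
       (\<Sum>i\<in>S. v i) = opt_welfare s v (remaining n r v))"

definition vcg_pay :: "nat \<Rightarrow> nat \<Rightarrow> (nat \<Rightarrow> real) \<Rightarrow> (nat \<Rightarrow> real) \<Rightarrow> nat \<Rightarrow> real" where
  "vcg_pay s n r v i = opt_welfare s v (remaining n r v - {i})
      - (opt_welfare s v (remaining n r v) - v i)"

definition Rev :: "nat \<Rightarrow> nat \<Rightarrow> (nat \<Rightarrow> real) \<Rightarrow> (nat \<Rightarrow> real) \<Rightarrow> real" where
  "Rev s n r v = (if remaining n r v = {} then 0
      else (\<Sum>i\<in>served s n r v. max (r i) (vcg_pay s n r v i)))"

definition auctions :: "nat \<Rightarrow> (nat \<Rightarrow> real) set" where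
  "auctions n = {r. (\<forall>i<n. 0 \<le> r i \<and> r i \<le> 1) \<and> (\<forall>i\<ge>n. r i = 0)}"

definition auctions_grid :: "nat \<Rightarrow> nat \<Rightarrow> (nat \<Rightarrow> real) set" where
  "auctions_grid n m = {r. (\<forall>i<n. \<exists>k\<in>{1..m}. r i = real k / real m) \<and> (\<forall>i\<ge>n. r i = 0)}"

definition nbits :: "nat \<Rightarrow> nat" where
  "nbits m = nat \<lceil>log 2 (real m)\<rceil>"

text \<open>Translation matrix Gamma^VCG: column j (0-based; column j+1 of the paper) corresponds to
  bidder i = j div L (paper's i = j div L + 1) and bit beta = j mod L + 1, the beta-th least
  significant bit of the integer m * r_i.\<close>
definition GammaVCG :: "nat \<Rightarrow> nat \<Rightarrow> (nat \<Rightarrow> real) \<Rightarrow> nat \<Rightarrow> real" where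
  "GammaVCG n m r j = (if j < n * nbits m then
      real ((nat \<lfloor>real m * r (j div nbits m)\<rfloor> div 2 ^ (j mod nbits m)) mod 2) else 0)"

definition perturb :: "nat \<Rightarrow> nat \<Rightarrow> (nat \<Rightarrow> real) \<Rightarrow> (nat \<Rightarrow> real) \<Rightarrow> real" where
  "perturb n m \<alpha> r = (\<Sum>j<n * nbits m. \<alpha> j * GammaVCG n m r j)"

definition gftpl_step :: "nat \<Rightarrow> nat \<Rightarrow> nat \<Rightarrow> real \<Rightarrow> (nat \<Rightarrow> nat \<Rightarrow> real) \<Rightarrow>
    (nat \<Rightarrow> real) \<Rightarrow> nat \<Rightarrow> (nat \<Rightarrow> real) \<Rightarrow> bool" where
  "gftpl_step n s m eps v \<alpha> t x \<longleftrightarrow> x \<in> auctions_grid n m \<and>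
     (\<forall>x'\<in>auctions_grid n m.
        (\<Sum>\<tau>\<in>{1..<t}. Rev s n x' (v \<tau>) / real s) + perturb n m \<alpha> x' - eps
          \<le> (\<Sum>\<tau>\<in>{1..<t}. Rev s n x (v \<tau>) / real s) + perturb n m \<alpha> x)"

definition alpha_measure :: "nat \<Rightarrow> real \<Rightarrow> (nat \<Rightarrow> real) measure" where
  "alpha_measure N eta = PiM {..<N} (\<lambda>_. uniform_measure lborel {0..1/eta})"

definition regret :: "nat \<Rightarrow> nat \<Rightarrow> nat \<Rightarrow> (nat \<Rightarrow> nat \<Rightarrow> real) \<Rightarrow> (nat \<Rightarrow> nat \<Rightarrow> real) \<Rightarrow> real" where
  "regret n s T v rs = (SUP r\<in>auctions n. \<Sum>t=1..T. Rev s n r (v t))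
      - (\<Sum>t=1..T. Rev s n (rs t) (v t))"

end

theory Submission
  imports Defs
begin

text \<open>First, a served bidder pays the larger of his reserve and the
  highest value of an unserved surviving bidder, so moving every reserve down by at most \<open>\<delta>\<close>
  (or up to at most \<open>\<delta>\<close>) loses at most \<open>s\<delta>\<close> revenue; rounding to the grid \<open>\<I>\<^sub>m\<close> thus
  costs \<open>s/m\<close> per round. Second, by the be-the-leader argument the \<open>\<epsilon>\<close>-approximate perturbed
  leaders \<open>x\<^sub>t\<close> compete with every grid point up to the range \<open>N/\<eta>\<close> of the perturbation
  (\<open>N = n\<lceil>log\<^sub>2 m\<rceil>\<close>), \<open>\<epsilon>T\<close>, and the stability terms \<open>f(x\<^sub>t\<^sub>+\<^sub>1, v\<^sub>t) - f(x\<^sub>t, v\<^sub>t) \<le> 1\<close>.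
  Third, \<open>\<Gamma>\<^sup>V\<^sup>C\<^sup>G\<close> is injective on \<open>\<I>\<^sub>m\<close>, so \<open>x\<^sub>t \<noteq> x\<^sub>t\<^sub>+\<^sub>1\<close> flips some bit \<open>j\<close>, which forces
  \<open>\<alpha>\<^sub>j\<close> into an interval of length \<open>2(1 + \<epsilon>)\<close> around a threshold not depending on \<open>\<alpha>\<^sub>j\<close>;
  for \<open>\<alpha>\<^sub>j\<close> uniform on \<open>[0, 1/\<eta>]\<close> this has probability at most \<open>2(1 + \<epsilon>)\<eta>\<close>.\<close>

section \<open>VCG revenue with reserves\<close>

definition highest_value :: "(nat \<Rightarrow> real) \<Rightarrow> nat set \<Rightarrow> real" where
  "highest_value v X = Max (insert 0 (v ` X))"

lemma highest_value_nonneg: "finite X \<Longrightarrow> 0 \<le> highest_value v X"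
  unfolding highest_value_def by (rule Max_ge) auto

lemma highest_value_ge: "finite X \<Longrightarrow> j \<in> X \<Longrightarrow> v j \<le> highest_value v X"
  unfolding highest_value_def by (rule Max_ge) auto

lemma highest_value_le:
  "finite X \<Longrightarrow> 0 \<le> c \<Longrightarrow> (\<And>j. j \<in> X \<Longrightarrow> v j \<le> c) \<Longrightarrow> highest_value v X \<le> c"
  unfolding highest_value_def by (subst Max_le_iff) auto

lemma highest_value_cases:
  "finite X \<Longrightarrow> highest_value v X = 0 \<or> (\<exists>j\<in>X. highest_value v X = v j)"
  unfolding highest_value_def using Max_in[of "insert 0 (v ` X)"] by auto

lemma finite_welfare_values:
  "finite A \<Longrightarrow> finite ((\<lambda>B. \<Sum>i\<in>B. v i) ` {B. B \<subseteq> A \<and> card B \<le> s})"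
  by (rule finite_imageI) (rule finite_subset[of _ "Pow A"], auto)

lemma opt_welfare_ge: "finite A \<Longrightarrow> B \<subseteq> A \<Longrightarrow> card B \<le> s \<Longrightarrow> sum v B \<le> opt_welfare s v A"
  unfolding opt_welfare_def by (rule Max_ge[OF finite_welfare_values]) auto

lemma opt_welfare_attained:
  assumes "finite A"
  obtains B where "B \<subseteq> A" "card B \<le> s" "sum v B = opt_welfare s v A"
proof -
  have "opt_welfare s v A \<in> (\<lambda>B. \<Sum>i\<in>B. v i) ` {B. B \<subseteq> A \<and> card B \<le> s}"
    unfolding opt_welfare_def by (rule Max_in[OF finite_welfare_values[OF assms]]) auto
  with that show ?thesis by auto
qed

lemma finite_remaining: "finite (remaining n r v)"
  unfolding remaining_def by auto

lemma served_spec: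
  "served s n r v \<subseteq> remaining n r v" "card (served s n r v) \<le> s"
  "sum v (served s n r v) = opt_welfare s v (remaining n r v)"
proof -
  obtain B where "B \<subseteq> remaining n r v" "card B \<le> s" "sum v B = opt_welfare s v (remaining n r v)"
    using opt_welfare_attained[OF finite_remaining] .
  then have "\<exists>S. S \<subseteq> remaining n r v \<and> card S \<le> s \<and> sum v S = opt_welfare s v (remaining n r v)"
    by blast
  from someI_ex[OF this] show "served s n r v \<subseteq> remaining n r v" "card (served s n r v) \<le> s"
    "sum v (served s n r v) = opt_welfare s v (remaining n r v)"
    unfolding served_def by auto
qed

lemma optimal_set_outsider_nonpos:
  assumes A: "finite A" and S: "S \<subseteq> A" "card S < s" "sum v S = opt_welfare s v A"
    and j: "j \<in> A - S"
  shows "v j \<le> 0"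
proof -
  have fS: "finite S" using A S finite_subset by blast
  have "card (insert j S) \<le> s" using S fS j by simp
  hence "sum v (insert j S) \<le> opt_welfare s v A" using A S j by (intro opt_welfare_ge) auto
  thus "v j \<le> 0" using fS j S by simp
qed

lemma optimal_set_dominates:
  assumes A: "finite A" and S: "S \<subseteq> A" "card S \<le> s" "sum v S = opt_welfare s v A"
    and k: "k \<in> S" and j: "j \<in> A - S" and nonneg: "\<forall>i\<in>A. 0 \<le> v i"
  shows "v j \<le> v k"
proof (cases "card S = s")
  case True
  have fS: "finite S" using A S finite_subset by blast
  let ?B = "insert j (S - {k})"
  have "card ?B = s" using True fS k j
    by (simp add: card_Diff_singleton) (metis Suc_pred card_gt_0_iff empty_iff)
  hence "sum v ?B \<le> opt_welfare s v A" using A S j by (intro opt_welfare_ge) auto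
  moreover have "sum v ?B = sum v S - v k + v j" using fS k j by (simp add: sum_diff1)
  ultimately show ?thesis using S by simp
next
  case False
  with S have "v j \<le> 0" using optimal_set_outsider_nonpos[OF A S(1) _ S(3) j] by simp
  thus ?thesis using nonneg k S by force
qed

lemma served_dominates:
  assumes nonneg: "\<forall>i<n. 0 \<le> v i"
    and "k \<in> served s n r v" "j \<in> remaining n r v - served s n r v"
  shows "v j \<le> v k"
  using optimal_set_dominates[OF finite_remaining served_spec assms(2,3)] nonneg
  unfolding remaining_def by auto

lemma loser_nonpos_if_not_full:
  assumes "card (served s n r v) < s" "j \<in> remaining n r v - served s n r v"
  shows "v j \<le> 0"
  using optimal_set_outsider_nonpos[OF finite_remaining served_spec(1) assms(1) served_spec(3)
      assms(2)] .

lemma opt_welfare_remove_le: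
  assumes A: "finite A" and S: "S \<subseteq> A" "card S \<le> s" "sum v S = opt_welfare s v A"
    and i: "i \<in> S" and nonneg: "\<forall>i\<in>A. 0 \<le> v i"
  shows "opt_welfare s v (A - {i}) \<le> opt_welfare s v A - v i + highest_value v (A - S)"
proof -
  let ?p = "highest_value v (A - S)"
  have fS: "finite S" using A S finite_subset by blast
  have fAS: "finite (A - S)" using A by auto
  obtain B where B: "B \<subseteq> A - {i}" "card B \<le> s" "sum v B = opt_welfare s v (A - {i})"
    using opt_welfare_attained[of "A - {i}"] A by auto
  have fB: "finite B" using A B finite_subset by blast
  have split_S: "S - {i} = (B \<inter> S) \<union> (S - B - {i})" "(B \<inter> S) \<inter> (S - B - {i}) = {}"
    using B by auto
  have sum_B: "sum v B = sum v (B \<inter> S) + sum v (B - S)"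
    using fB by (metis Int_Diff_Un Int_Diff_disjoint finite_Diff finite_Int sum.union_disjoint)
  have "sum v (S - {i}) = sum v (B \<inter> S) + sum v (S - B - {i})"
    using fS split_S by (metis finite_Diff finite_Int sum.union_disjoint)
  hence sum_S: "sum v S - v i = sum v (B \<inter> S) + sum v (S - B - {i})"
    using fS i by (simp add: sum_diff1)
  show ?thesis
  proof (cases "card S = s")
    case True
    have card_B: "card B = card (B \<inter> S) + card (B - S)"
      using fB by (metis Int_Diff_Un Int_Diff_disjoint finite_Diff finite_Int card_Un_disjoint)
    have "card (S - {i}) = card (B \<inter> S) + card (S - B - {i})"
      using fS split_S by (metis card_Un_disjoint finite_Diff finite_Int)
    moreover have "card (S - {i}) = s - 1" using True i fS by simp
    moreover have "s \<ge> 1" using True i fS by (metis One_nat_def Suc_leI card_gt_0_iff empty_iff)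
    ultimately have card_le: "card (B - S) \<le> card (S - B - {i}) + 1" using card_B B(2) by linarith
    have "sum v (B - S) \<le> real (card (B - S)) * ?p"
      using sum_bounded_above[of "B - S" v ?p] highest_value_ge[OF fAS, of _ v] B by auto
    also have "\<dots> \<le> real (card (S - B - {i}) + 1) * ?p"
      using card_le highest_value_nonneg[OF fAS, of v] by (intro mult_right_mono) auto
    also have "\<dots> = real (card (S - B - {i})) * ?p + ?p" by (simp add: algebra_simps)
    also have "real (card (S - B - {i})) * ?p \<le> sum v (S - B - {i})"
    proof -
      have "?p \<le> v k" if "k \<in> S" for k
        using fAS optimal_set_dominates[OF A S that _ nonneg] nonneg S that
        by (intro highest_value_le) auto
      thus ?thesis using sum_bounded_below[of "S - B - {i}" ?p v] by auto
    qed
    finally show ?thesis using B(3) sum_B sum_S S(3) by linarith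
  next
    case False
    hence "card S < s" using S by simp
    hence "sum v (B - S) \<le> 0"
      using optimal_set_outsider_nonpos[OF A S(1) _ S(3)] B by (intro sum_nonpos) auto
    moreover have "sum v (S - B - {i}) \<ge> 0" using nonneg S by (intro sum_nonneg) auto
    ultimately show ?thesis
      using B(3) sum_B sum_S highest_value_nonneg[OF fAS, of v] S(3) by linarith
  qed
qed

lemma opt_welfare_remove_ge:
  assumes A: "finite A" and S: "S \<subseteq> A" "card S \<le> s" "sum v S = opt_welfare s v A"
    and i: "i \<in> S"
  shows "opt_welfare s v A - v i + highest_value v (A - S) \<le> opt_welfare s v (A - {i})"
proof -
  have fS: "finite S" using A S finite_subset by blast
  consider "highest_value v (A - S) = 0" | j where "j \<in> A - S" "highest_value v (A - S) = v j"
    using highest_value_cases[of "A - S" v] A by auto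
  then show ?thesis
  proof cases
    case 1
    have "sum v (S - {i}) \<le> opt_welfare s v (A - {i})"
      using A S by (intro opt_welfare_ge) (auto simp: card_Diff_singleton_if fS)
    thus ?thesis using 1 i fS S by (simp add: sum_diff1)
  next
    case (2 j)
    have "card (insert j (S - {i})) \<le> s" using 2 S i fS
      by (simp add: card_Diff_singleton) (metis Suc_pred card_gt_0_iff empty_iff)
    hence "sum v (insert j (S - {i})) \<le> opt_welfare s v (A - {i})"
      using A S 2 i by (intro opt_welfare_ge) auto
    thus ?thesis using 2 i fS S(3) by (simp add: sum_diff1)
  qed
qed

lemma Rev_highest_loser:
  assumes nonneg: "\<forall>i<n. 0 \<le> v i"
  shows "Rev s n r v =
    (\<Sum>i\<in>served s n r v. max (r i) (highest_value v (remaining n r v - served s n r v)))"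
proof (cases "remaining n r v = {}")
  case True
  hence "served s n r v = {}" using served_spec(1) by blast
  thus ?thesis using True unfolding Rev_def by simp
next
  case False
  have nonneg': "\<forall>i\<in>remaining n r v. 0 \<le> v i" using nonneg unfolding remaining_def by auto
  have "vcg_pay s n r v i = highest_value v (remaining n r v - served s n r v)"
    if "i \<in> served s n r v" for i
    using opt_welfare_remove_le[OF finite_remaining served_spec that nonneg']
      opt_welfare_remove_ge[OF finite_remaining served_spec that]
    unfolding vcg_pay_def by linarith
  thus ?thesis unfolding Rev_def using False by (auto intro!: sum.cong)
qed

lemma highest_loser_le_served:
  assumes nonneg: "\<forall>i<n. 0 \<le> v i" and k: "k \<in> served s n r v"
  shows "highest_value v (remaining n r v - served s n r v) \<le> v k"
proof (rule highest_value_le)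
  show "finite (remaining n r v - served s n r v)" using finite_remaining by auto
  show "0 \<le> v k" using nonneg k served_spec(1)[of s n r v] unfolding remaining_def by auto
  show "v j \<le> v k" if "j \<in> remaining n r v - served s n r v" for j
    using served_dominates[OF nonneg k that] .
qed

lemma Rev_bounds:
  assumes v: "\<forall>i<n. 0 \<le> v i \<and> v i \<le> 1"
  shows "0 \<le> Rev s n r v" "Rev s n r v \<le> real s"
proof -
  let ?S = "served s n r v" and ?R = "remaining n r v"
  let ?pay = "\<lambda>i. max (r i) (highest_value v (?R - ?S))"
  have nonneg: "\<forall>i<n. 0 \<le> v i" using v by auto
  have "0 \<le> highest_value v (?R - ?S)" using finite_remaining by (intro highest_value_nonneg) auto
  hence "0 \<le> sum ?pay ?S" by (intro sum_nonneg) auto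
  thus "0 \<le> Rev s n r v" using Rev_highest_loser[OF nonneg] by simp
  have "?pay i \<le> 1" if i: "i \<in> ?S" for i
  proof -
    have "i < n" "r i \<le> v i" using i served_spec(1)[of s n r v] unfolding remaining_def by auto
    thus ?thesis using highest_loser_le_served[OF nonneg i] v by force
  qed
  hence "sum ?pay ?S \<le> real (card ?S) * 1"
    using sum_bounded_above[of ?S ?pay 1] by auto
  also have "\<dots> \<le> real s" using served_spec(2)[of s n r v] by simp
  finally show "Rev s n r v \<le> real s" using Rev_highest_loser[OF nonneg] by simp
qed

locale reserve_perturbation =
  fixes s n :: nat and v r r' :: "nat \<Rightarrow> real" and \<delta> :: real
  assumes values_nonneg: "\<forall>i<n. 0 \<le> v i"
    and delta_nonneg: "0 \<le> \<delta>"
    and reserve_lower: "\<And>i. i < n \<Longrightarrow> r i - \<delta> \<le> r' i"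
    and reserve_upper: "\<And>i. i < n \<Longrightarrow> r' i \<le> max (r i) \<delta>"
begin

abbreviation "Rem \<equiv> remaining n r v"
abbreviation "Rem' \<equiv> remaining n r' v"
abbreviation "Srv \<equiv> served s n r v"
abbreviation "Srv' \<equiv> served s n r' v"
abbreviation "price \<equiv> highest_value v (Rem - Srv)"
abbreviation "price' \<equiv> highest_value v (Rem' - Srv')"

lemma finite_served: "finite Srv" "finite Srv'"
  using finite_remaining served_spec(1) finite_subset by metis+

lemma price_nonneg: "0 \<le> price" "0 \<le> price'"
  using finite_remaining by (auto intro: highest_value_nonneg)

lemma served_pays_le_value: "i \<in> Srv \<Longrightarrow> max (r i) price \<le> v i"
  using highest_loser_le_served[OF values_nonneg] served_spec(1)[of s n r v]
  unfolding remaining_def by fastforce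

lemma remains_if_value_ge: "i \<in> Rem \<Longrightarrow> \<delta> \<le> v i \<Longrightarrow> i \<in> Rem'"
  using reserve_upper[of i] unfolding remaining_def by fastforce

lemma price_lower: "price - \<delta> \<le> price'"
proof (cases "price \<le> \<delta>")
  case True
  thus ?thesis using price_nonneg by simp
next
  case False
  then obtain j where j: "j \<in> Rem - Srv" "price = v j"
    using highest_value_cases[of "Rem - Srv" v] finite_remaining delta_nonneg by force
  have full: "card Srv = s"
    using loser_nonpos_if_not_full[OF _ j(1)] served_spec(2)[of s n r v] j False delta_nonneg
    by fastforce
  have "insert j Srv \<subseteq> Rem'"
  proof
    fix k assume "k \<in> insert j Srv"
    hence "k \<in> Rem" "v j \<le> v k" using j served_spec(1)[of s n r v] served_dominates[OF values_nonneg] by auto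
    thus "k \<in> Rem'" using remains_if_value_ge j False by force
  qed
  moreover have "\<not> insert j Srv \<subseteq> Srv'"
  proof
    assume "insert j Srv \<subseteq> Srv'"
    hence "card (insert j Srv) \<le> card Srv'" by (rule card_mono[OF finite_served(2)])
    thus False using full j finite_served served_spec(2)[of s n r' v] by simp
  qed
  ultimately obtain k where k: "k \<in> insert j Srv" "k \<in> Rem' - Srv'" by blast
  have "v j \<le> v k" using k j served_dominates[OF values_nonneg] by auto
  moreover have "v k \<le> price'" using k finite_remaining by (intro highest_value_ge) auto
  ultimately show ?thesis using j delta_nonneg by linarith
qed

lemma lost_payments:
  "(\<Sum>i\<in>Srv - Srv'. max (r i) price)
     \<le> real (card (Srv - Srv')) * \<delta> + (\<Sum>i\<in>Srv' - Srv. max (r' i) price')"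
proof (cases "card Srv' = s")
  case True
  have pay_le: "max (r i) price \<le> \<delta> + price'" if i: "i \<in> Srv - Srv'" for i
  proof (cases "i \<in> Rem'")
    case True
    hence "v i \<le> price'" using i finite_remaining by (intro highest_value_ge) auto
    thus ?thesis using served_pays_le_value i delta_nonneg by force
  next
    case False
    hence "v i < \<delta>" using remains_if_value_ge i served_spec(1)[of s n r v] by force
    thus ?thesis using served_pays_le_value i price_nonneg by force
  qed
  hence "(\<Sum>i\<in>Srv - Srv'. max (r i) price) \<le> real (card (Srv - Srv')) * (\<delta> + price')"
    using sum_bounded_above[of "Srv - Srv'" "\<lambda>i. max (r i) price", OF pay_le] by simp
  also have "\<dots> \<le> real (card (Srv - Srv')) * \<delta> + real (card (Srv' - Srv)) * price'"
  proof -
    have "card Srv = card (Srv \<inter> Srv') + card (Srv - Srv')"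
      "card Srv' = card (Srv' \<inter> Srv) + card (Srv' - Srv)"
      using finite_served
      by (metis Int_Diff_Un Int_Diff_disjoint finite_Diff finite_Int card_Un_disjoint)+
    hence "card (Srv - Srv') \<le> card (Srv' - Srv)"
      using True served_spec(2)[of s n r v] by (simp add: Int_commute)
    thus ?thesis using price_nonneg by (simp add: distrib_left mult_right_mono)
  qed
  also have "real (card (Srv' - Srv)) * price' \<le> (\<Sum>i\<in>Srv' - Srv. max (r' i) price')"
    using sum_bounded_below[of "Srv' - Srv" price' "\<lambda>i. max (r' i) price'"] by auto
  finally show ?thesis by simp
next
  case False
  hence not_full: "card Srv' < s" using served_spec(2)[of s n r' v] by simp
  have pay_le: "max (r i) price \<le> \<delta>" if i: "i \<in> Srv - Srv'" for i
  proof (cases "i \<in> Rem'")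
    case True
    thus ?thesis using loser_nonpos_if_not_full[OF not_full] served_pays_le_value i delta_nonneg
      by force
  next
    case False
    thus ?thesis using remains_if_value_ge i served_spec(1)[of s n r v] served_pays_le_value
      by force
  qed
  hence "(\<Sum>i\<in>Srv - Srv'. max (r i) price) \<le> real (card (Srv - Srv')) * \<delta>"
    using sum_bounded_above[of "Srv - Srv'" "\<lambda>i. max (r i) price", OF pay_le] by simp
  moreover have "0 \<le> (\<Sum>i\<in>Srv' - Srv. max (r' i) price')"
    using price_nonneg by (intro sum_nonneg) auto
  ultimately show ?thesis by linarith
qed

lemma Rev_le: "Rev s n r v \<le> Rev s n r' v + real s * \<delta>"
proof -
  let ?pay = "\<lambda>i. max (r i) price" and ?pay' = "\<lambda>i. max (r' i) price'"
  have "?pay i \<le> ?pay' i + \<delta>" if "i \<in> Srv \<inter> Srv'" for i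
    using that served_spec(1)[of s n r v] reserve_lower price_lower unfolding remaining_def
    by fastforce
  hence common: "sum ?pay (Srv \<inter> Srv') \<le> sum ?pay' (Srv \<inter> Srv') + real (card (Srv \<inter> Srv')) * \<delta>"
    using sum_mono[of "Srv \<inter> Srv'" ?pay "\<lambda>i. ?pay' i + \<delta>"] by (simp add: sum.distrib)
  have "Rev s n r v = sum ?pay (Srv \<inter> Srv') + sum ?pay (Srv - Srv')"
    "Rev s n r' v = sum ?pay' (Srv \<inter> Srv') + sum ?pay' (Srv' - Srv)"
    using Rev_highest_loser[OF values_nonneg] finite_served
    by (metis Int_commute Int_Diff_Un Int_Diff_disjoint finite_Diff finite_Int sum.union_disjoint)+
  moreover have "(real (card (Srv \<inter> Srv')) + real (card (Srv - Srv'))) * \<delta> \<le> real s * \<delta>"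
  proof (rule mult_right_mono[OF _ delta_nonneg])
    have "card (Srv \<inter> Srv') + card (Srv - Srv') = card Srv"
      using finite_served by (metis Int_Diff_Un Int_Diff_disjoint finite_Diff finite_Int card_Un_disjoint)
    thus "real (card (Srv \<inter> Srv')) + real (card (Srv - Srv')) \<le> real s"
      using served_spec(2)[of s n r v] by linarith
  qed
  ultimately show ?thesis using common lost_payments by (simp add: distrib_right)
qed

end

section \<open>The grid of reserves and its binary encoding\<close>

definition grid_round :: "nat \<Rightarrow> nat \<Rightarrow> (nat \<Rightarrow> real) \<Rightarrow> nat \<Rightarrow> real" where
  "grid_round m n r i = (if i < n then real (max 1 (nat \<lfloor>real m * r i\<rfloor>)) / real m else 0)"

lemma grid_round_in_grid:
  assumes m: "1 \<le> m" and r: "r \<in> auctions n"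
  shows "grid_round m n r \<in> auctions_grid n m"
  unfolding auctions_grid_def
proof safe
  fix i assume i: "i < n"
  have "real m * r i \<le> real m" using r i m unfolding auctions_def by (simp add: mult_left_le)
  hence "nat \<lfloor>real m * r i\<rfloor> \<le> m" by linarith
  hence "max 1 (nat \<lfloor>real m * r i\<rfloor>) \<in> {1..m}" using m by auto
  thus "\<exists>k\<in>{1..m}. grid_round m n r i = real k / real m" using i unfolding grid_round_def by auto
qed (simp add: grid_round_def)

lemma grid_round_bounds:
  assumes m: "1 \<le> m" and r: "r \<in> auctions n" and i: "i < n"
  shows "r i - 1 / real m \<le> grid_round m n r i" "grid_round m n r i \<le> max (r i) (1 / real m)"
proof -
  let ?k = "real (max 1 (nat \<lfloor>real m * r i\<rfloor>))"
  have "0 \<le> r i" using r i unfolding auctions_def by auto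
  hence k: "real m * r i - 1 \<le> ?k" "?k \<le> max (real m * r i) 1"
    by (auto simp: max_def) linarith+
  have m_pos: "0 < real m" using m by simp
  have "r i - 1 / real m = (real m * r i - 1) / real m" using m_pos by (simp add: field_simps)
  also have "\<dots> \<le> ?k / real m" using k(1) m_pos by (intro divide_right_mono) auto
  finally show "r i - 1 / real m \<le> grid_round m n r i" unfolding grid_round_def using i by simp
  have "?k / real m \<le> max (real m * r i) 1 / real m" using k(2) m_pos by (intro divide_right_mono) auto
  also have "\<dots> = max (r i) (1 / real m)" using m_pos by (simp add: max_def field_simps)
  finally show "grid_round m n r i \<le> max (r i) (1 / real m)" unfolding grid_round_def using i by simp
qed

lemma Rev_le_Rev_grid_round:
  assumes "1 \<le> m" "r \<in> auctions n" "\<forall>i<n. 0 \<le> v i"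
  shows "Rev s n r v \<le> Rev s n (grid_round m n r) v + real s / real m"
proof -
  interpret reserve_perturbation s n v r "grid_round m n r" "1 / real m"
    using assms grid_round_bounds by unfold_locales auto
  show ?thesis using Rev_le by simp
qed

lemma finite_auctions_grid: "finite (auctions_grid n m)"
proof -
  let ?V = "(\<lambda>k. real k / real m) ` {1..m}"
  have "inj_on (\<lambda>f. restrict f {..<n}) (auctions_grid n m)"
  proof (rule inj_onI, rule ext)
    fix f g i assume "f \<in> auctions_grid n m" "g \<in> auctions_grid n m"
      and "restrict f {..<n} = restrict g {..<n}"
    thus "f i = g i" unfolding auctions_grid_def by (cases "i < n") (auto dest: fun_cong[of _ _ i])
  qed
  moreover have "(\<lambda>f. restrict f {..<n}) ` auctions_grid n m \<subseteq> PiE {..<n} (\<lambda>_. ?V)"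
    unfolding auctions_grid_def by (auto simp: PiE_def Pi_def)
  ultimately show ?thesis by (meson finite_PiE finite_atLeastAtMost finite_imageD finite_imageI
      finite_lessThan finite_subset)
qed

lemma GammaVCG_cases: "GammaVCG n m r j = 0 \<or> GammaVCG n m r j = 1"
  unfolding GammaVCG_def by auto

lemma mod_power2_eq_if_bits_eq:
  fixes a b :: nat
  shows "(\<And>\<beta>. \<beta> < L \<Longrightarrow> (a div 2 ^ \<beta>) mod 2 = (b div 2 ^ \<beta>) mod 2) \<Longrightarrow> a mod 2 ^ L = b mod 2 ^ L"
proof (induction L)
  case (Suc L)
  have pow: "(2::nat) ^ Suc L = 2 ^ L * 2" by simp
  have "a mod 2 ^ Suc L = 2 ^ L * (a div 2 ^ L mod 2) + a mod 2 ^ L"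
    "b mod 2 ^ Suc L = 2 ^ L * (b div 2 ^ L mod 2) + b mod 2 ^ L"
    unfolding pow by (rule mod_mult2_eq)+
  thus ?case using Suc by simp
qed simp

lemma eq_if_mod_eq_range:
  fixes a b K :: nat
  assumes "1 \<le> a" "a \<le> K" "1 \<le> b" "b \<le> K" "a mod K = b mod K"
  shows "a = b"
  using assms by (metis le_neq_implies_less mod_less mod_self not_one_le_zero)

lemma le_power2_nbits: assumes "1 \<le> m" shows "m \<le> 2 ^ nbits m"
proof -
  have "real m = 2 powr (log 2 (real m))" using assms by simp
  also have "\<dots> \<le> 2 powr (real (nbits m))"
    unfolding nbits_def using assms by (intro powr_mono) linarith+
  also have "\<dots> = 2 ^ nbits m" by (simp add: powr_realpow)
  finally show ?thesis by (metis of_nat_le_iff of_nat_numeral of_nat_power)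
qed

lemma grid_point_eq:
  assumes m: "1 \<le> m" and x: "x \<in> auctions_grid n m" and i: "i < n"
  obtains k where "k \<in> {1..m}" "x i = real k / real m" "nat \<lfloor>real m * x i\<rfloor> = k"
proof -
  obtain k where k: "k \<in> {1..m}" "x i = real k / real m"
    using x i unfolding auctions_grid_def by auto
  hence "real m * x i = real k" using m by simp
  thus ?thesis using k that by auto
qed

text \<open>\<open>m r\<^sub>i \<in> {1..m}\<close> and \<open>m \<le> 2\<^sup>L\<close>, so the \<open>L\<close> low bits determine \<open>m r\<^sub>i\<close>.\<close>
lemma grid_eq_if_GammaVCG_eq:
  assumes m: "1 \<le> m" and x: "x \<in> auctions_grid n m" and y: "y \<in> auctions_grid n m"
    and eq: "\<forall>j<n * nbits m. GammaVCG n m x j = GammaVCG n m y j"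
  shows "x = y"
proof
  fix i show "x i = y i"
  proof (cases "i < n")
    case False thus ?thesis using x y unfolding auctions_grid_def by auto
  next
    case True
    let ?L = "nbits m"
    obtain a where a: "a \<in> {1..m}" "x i = real a / real m" "nat \<lfloor>real m * x i\<rfloor> = a"
      using grid_point_eq[OF m x True] .
    obtain b where b: "b \<in> {1..m}" "y i = real b / real m" "nat \<lfloor>real m * y i\<rfloor> = b"
      using grid_point_eq[OF m y True] .
    have "(a div 2 ^ \<beta>) mod 2 = (b div 2 ^ \<beta>) mod 2" if \<beta>: "\<beta> < ?L" for \<beta>
    proof -
      define j where "j = i * ?L + \<beta>"
      have j: "j div ?L = i" "j mod ?L = \<beta>" unfolding j_def using \<beta> by auto
      have "j < Suc i * ?L" unfolding j_def using \<beta> by simp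
      also have "\<dots> \<le> n * ?L" using True by (intro mult_right_mono) auto
      finally have "j < n * ?L" .
      thus ?thesis using eq j a b unfolding GammaVCG_def by fastforce
    qed
    hence "a mod 2 ^ ?L = b mod 2 ^ ?L" by (rule mod_power2_eq_if_bits_eq)
    hence "a = b" using a b le_power2_nbits[OF m] by (intro eq_if_mod_eq_range[of a "2 ^ ?L" b]) auto
    thus ?thesis using a b by simp
  qed
qed

section \<open>Generalized follow the perturbed leader\<close>

definition cum_payoff ::
    "nat \<Rightarrow> nat \<Rightarrow> (nat \<Rightarrow> nat \<Rightarrow> real) \<Rightarrow> nat \<Rightarrow> (nat \<Rightarrow> real) \<Rightarrow> real" where
  "cum_payoff s n v t x = (\<Sum>\<tau>\<in>{1..<t}. Rev s n x (v \<tau>) / real s)"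

lemma gftpl_step_iff:
  "gftpl_step n s m eps v \<alpha> t x \<longleftrightarrow> x \<in> auctions_grid n m \<and>
     (\<forall>y\<in>auctions_grid n m. cum_payoff s n v t y + perturb n m \<alpha> y - eps
        \<le> cum_payoff s n v t x + perturb n m \<alpha> x)"
  unfolding gftpl_step_def cum_payoff_def ..

lemma cum_payoff_Suc:
  "1 \<le> t \<Longrightarrow> cum_payoff s n v (Suc t) x = cum_payoff s n v t x + Rev s n x (v t) / real s"
  unfolding cum_payoff_def by (simp add: sum.atLeastLessThan_Suc)

lemma cum_payoff_Suc_0 [simp]: "cum_payoff s n v (Suc 0) x = 0"
  unfolding cum_payoff_def by simp

lemma be_the_leader:
  assumes step: "\<forall>t\<in>{1..T}. gftpl_step n s m eps v \<alpha> t (X t)"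
  shows "1 \<le> k \<Longrightarrow> k \<le> T \<Longrightarrow> x \<in> auctions_grid n m \<Longrightarrow>
    cum_payoff s n v k x + perturb n m \<alpha> x
      \<le> (\<Sum>t\<in>{1..<k}. Rev s n (X (Suc t)) (v t) / real s) + perturb n m \<alpha> (X 1) + eps * real k"
proof (induction k arbitrary: x)
  case (Suc k)
  show ?case
  proof (cases "k = 0")
    case True
    have "gftpl_step n s m eps v \<alpha> 1 (X 1)" using step Suc.prems True by auto
    hence "cum_payoff s n v 1 x + perturb n m \<alpha> x - eps \<le> cum_payoff s n v 1 (X 1) + perturb n m \<alpha> (X 1)"
      using Suc.prems(3) unfolding gftpl_step_iff by blast
    thus ?thesis using True by (simp add: One_nat_def)
  next
    case False
    let ?y = "X (Suc k)"
    have leader: "gftpl_step n s m eps v \<alpha> (Suc k) ?y" using step Suc.prems by auto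
    hence y: "?y \<in> auctions_grid n m" unfolding gftpl_step_iff by blast
    have "cum_payoff s n v (Suc k) x + perturb n m \<alpha> x - eps
        \<le> cum_payoff s n v (Suc k) ?y + perturb n m \<alpha> ?y"
      using leader Suc.prems(3) unfolding gftpl_step_iff by blast
    also have "\<dots> = cum_payoff s n v k ?y + perturb n m \<alpha> ?y + Rev s n ?y (v k) / real s"
      using False by (simp add: cum_payoff_Suc)
    also have "\<dots> \<le> (\<Sum>t\<in>{1..<k}. Rev s n (X (Suc t)) (v t) / real s) + perturb n m \<alpha> (X 1)
        + eps * real k + Rev s n ?y (v k) / real s"
      using Suc.IH[OF _ _ y] Suc.prems False by simp
    finally show ?thesis using False by (simp add: sum.atLeastLessThan_Suc algebra_simps)
  qed
qed simp

text \<open>Stability in one coordinate \<open>a\<close> of the perturbation: \<open>x\<close> and \<open>x'\<close> are approximate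
  leaders before and after a payoff \<open>g \<in> [0,1]\<close> arrives.\<close>
lemma switch_near_threshold:
  fixes h g b :: "'a \<Rightarrow> real"
  assumes X: "finite X" "x \<in> X" "x' \<in> X" and b01: "\<forall>y\<in>X. b y = 0 \<or> b y = 1"
    and switch: "b x \<noteq> b x'"
    and lead: "\<forall>y\<in>X. h y + a * b y - eps \<le> h x + a * b x"
    and lead': "\<forall>y\<in>X. h y + g y + a * b y - eps \<le> h x' + g x' + a * b x'"
    and g: "\<forall>y\<in>X. 0 \<le> g y \<and> g y \<le> 1"
  shows "\<bar>a - (Max (h ` {y\<in>X. b y = 0}) - Max (h ` {y\<in>X. b y = 1}))\<bar> \<le> 1 + eps"
proof -
  let ?X0 = "{y\<in>X. b y = 0}" and ?X1 = "{y\<in>X. b y = 1}"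
  have fin: "finite ?X0" "finite ?X1" using X(1) by auto
  have "?X0 \<noteq> {}" "?X1 \<noteq> {}"
    using X bspec[OF b01 X(2)] bspec[OF b01 X(3)] switch by auto
  hence "Max (h ` ?X0) \<in> h ` ?X0" "Max (h ` ?X1) \<in> h ` ?X1"
    using fin by (simp_all add: Max_in)
  then obtain y0 y1 where y0: "y0 \<in> ?X0" "Max (h ` ?X0) = h y0"
    and y1: "y1 \<in> ?X1" "Max (h ` ?X1) = h y1" by blast
  have le_max: "h y \<le> h y0" if "y \<in> ?X0" for y
    using Max_ge[OF finite_imageI[OF fin(1)] imageI[OF that, of h]] y0(2) by simp
  have le_max': "h y \<le> h y1" if "y \<in> ?X1" for y
    using Max_ge[OF finite_imageI[OF fin(2)] imageI[OF that, of h]] y1(2) by simp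
  have "\<bar>a - (h y0 - h y1)\<bar> \<le> 1 + eps"
  proof (cases "b x = 1")
    case True
    hence b: "b x = 1" "b x' = 0" using bspec[OF b01 X(3)] switch by auto
    have "h y0 - eps \<le> h x + a" using bspec[OF lead, of y0] y0(1) b by simp
    moreover have "h y1 + g y1 + a - eps \<le> h x' + g x'" using bspec[OF lead', of y1] y1(1) b by simp
    moreover have "h x \<le> h y1" "h x' \<le> h y0" using le_max le_max' X b by auto
    moreover have "0 \<le> g y1" "g x' \<le> 1" using g y1(1) X(3) by auto
    ultimately show ?thesis unfolding abs_le_iff by linarith
  next
    case False
    hence b: "b x = 0" "b x' = 1" using bspec[OF b01 X(2)] bspec[OF b01 X(3)] switch by auto
    have "h y1 + a - eps \<le> h x" using bspec[OF lead, of y1] y1(1) b by simp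
    moreover have "h y0 + g y0 - eps \<le> h x' + g x' + a" using bspec[OF lead', of y0] y0(1) b by simp
    moreover have "h x \<le> h y0" "h x' \<le> h y1" using le_max le_max' X b by auto
    moreover have "0 \<le> g y0" "g x' \<le> 1" using g y0(1) X(3) by auto
    ultimately show ?thesis unfolding abs_le_iff by linarith
  qed
  thus ?thesis using y0(2) y1(2) by simp
qed

definition bit_class :: "nat \<Rightarrow> nat \<Rightarrow> nat \<Rightarrow> real \<Rightarrow> (nat \<Rightarrow> real) set" where
  "bit_class n m j b = {x \<in> auctions_grid n m. GammaVCG n m x j = b}"

definition payoff_without_bit ::
    "nat \<Rightarrow> nat \<Rightarrow> nat \<Rightarrow> (nat \<Rightarrow> nat \<Rightarrow> real) \<Rightarrow> nat \<Rightarrow> nat \<Rightarrow> (nat \<Rightarrow> real) \<Rightarrow> (nat \<Rightarrow> real) \<Rightarrow> real" where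
  "payoff_without_bit n s m v t j \<alpha> x =
     cum_payoff s n v t x + (\<Sum>k\<in>{..<n * nbits m} - {j}. \<alpha> k * GammaVCG n m x k)"

definition bit_threshold ::
    "nat \<Rightarrow> nat \<Rightarrow> nat \<Rightarrow> (nat \<Rightarrow> nat \<Rightarrow> real) \<Rightarrow> nat \<Rightarrow> nat \<Rightarrow> (nat \<Rightarrow> real) \<Rightarrow> real" where
  "bit_threshold n s m v t j \<alpha> =
     Max (payoff_without_bit n s m v t j \<alpha> ` bit_class n m j 0)
     - Max (payoff_without_bit n s m v t j \<alpha> ` bit_class n m j 1)"

definition switch_event ::
    "(nat \<Rightarrow> real) set \<Rightarrow> nat \<Rightarrow> nat \<Rightarrow> nat \<Rightarrow> real \<Rightarrow> (nat \<Rightarrow> nat \<Rightarrow> real) \<Rightarrow> nat \<Rightarrow> nat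
       \<Rightarrow> (nat \<Rightarrow> real) set" where
  "switch_event \<Omega> n s m eps v t j = {\<alpha> \<in> \<Omega>. bit_class n m j 0 \<noteq> {} \<and> bit_class n m j 1 \<noteq> {} \<and>
     \<bar>\<alpha> j - bit_threshold n s m v t j \<alpha>\<bar> \<le> 1 + eps}"

lemma perturb_split:
  "j < n * nbits m \<Longrightarrow> perturb n m \<alpha> x
     = \<alpha> j * GammaVCG n m x j + (\<Sum>k\<in>{..<n * nbits m} - {j}. \<alpha> k * GammaVCG n m x k)"
  unfolding perturb_def by (subst sum.remove[of _ j]) auto

lemma payoff_in_unit_interval:
  assumes "\<forall>i<n. 0 \<le> v i \<and> v i \<le> 1" "1 \<le> s"
  shows "0 \<le> Rev s n x v / real s" "Rev s n x v / real s \<le> 1"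
  using Rev_bounds[OF assms(1), of s x] assms(2) by auto

lemma bit_switch_in_switch_event:
  assumes v: "\<forall>i<n. 0 \<le> v t i \<and> v t i \<le> 1" and s: "1 \<le> s" and t: "1 \<le> t"
    and step: "gftpl_step n s m eps v \<alpha> t x" "gftpl_step n s m eps v \<alpha> (Suc t) x'"
    and j: "j < n * nbits m" and switch: "GammaVCG n m x j \<noteq> GammaVCG n m x' j"
    and \<Omega>: "\<alpha> \<in> \<Omega>"
  shows "\<alpha> \<in> switch_event \<Omega> n s m eps v t j"
proof -
  let ?h = "payoff_without_bit n s m v t j \<alpha>" and ?b = "\<lambda>y. GammaVCG n m y j"
  have X: "x \<in> auctions_grid n m" "x' \<in> auctions_grid n m" using step unfolding gftpl_step_iff by auto
  have classes: "bit_class n m j c = {y \<in> auctions_grid n m. ?b y = c}" for c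
    unfolding bit_class_def ..
  have "\<bar>\<alpha> j - bit_threshold n s m v t j \<alpha>\<bar> \<le> 1 + eps"
    unfolding bit_threshold_def classes
  proof (rule switch_near_threshold[where X = "auctions_grid n m" and b = ?b and h = ?h
        and g = "\<lambda>y. Rev s n y (v t) / real s", OF finite_auctions_grid X _ switch])
    show "\<forall>y\<in>auctions_grid n m. ?b y = 0 \<or> ?b y = 1" using GammaVCG_cases by blast
    show "\<forall>y\<in>auctions_grid n m. ?h y + \<alpha> j * ?b y - eps \<le> ?h x + \<alpha> j * ?b x"
    proof
      fix y assume "y \<in> auctions_grid n m"
      with step(1) have "cum_payoff s n v t y + perturb n m \<alpha> y - eps
          \<le> cum_payoff s n v t x + perturb n m \<alpha> x"
        unfolding gftpl_step_iff by blast
      thus "?h y + \<alpha> j * ?b y - eps \<le> ?h x + \<alpha> j * ?b x"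
        unfolding payoff_without_bit_def perturb_split[OF j] by linarith
    qed
    show "\<forall>y\<in>auctions_grid n m. ?h y + Rev s n y (v t) / real s + \<alpha> j * ?b y - eps
        \<le> ?h x' + Rev s n x' (v t) / real s + \<alpha> j * ?b x'"
    proof
      fix y assume "y \<in> auctions_grid n m"
      with step(2) have "cum_payoff s n v (Suc t) y + perturb n m \<alpha> y - eps
          \<le> cum_payoff s n v (Suc t) x' + perturb n m \<alpha> x'"
        unfolding gftpl_step_iff by blast
      thus "?h y + Rev s n y (v t) / real s + \<alpha> j * ?b y - eps
          \<le> ?h x' + Rev s n x' (v t) / real s + \<alpha> j * ?b x'"
        unfolding payoff_without_bit_def perturb_split[OF j] cum_payoff_Suc[OF t] by linarith
    qed
    show "\<forall>y\<in>auctions_grid n m. 0 \<le> Rev s n y (v t) / real s \<and> Rev s n y (v t) / real s \<le> 1"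
      using payoff_in_unit_interval[OF v s] by blast
  qed
  moreover have "bit_class n m j 0 \<noteq> {}" "bit_class n m j 1 \<noteq> {}"
    using X switch GammaVCG_cases[of n m x j] GammaVCG_cases[of n m x' j]
    unfolding bit_class_def by fastforce+
  ultimately show ?thesis using \<Omega> unfolding switch_event_def by blast
qed

lemma payoff_gain_le_switches:
  assumes v: "\<forall>i<n. 0 \<le> v t i \<and> v t i \<le> 1" and s: "1 \<le> s" and m: "1 \<le> m" and t: "1 \<le> t"
    and step: "gftpl_step n s m eps v \<alpha> t x" "gftpl_step n s m eps v \<alpha> (Suc t) x'"
    and \<Omega>: "\<alpha> \<in> \<Omega>"
  shows "Rev s n x' (v t) / real s - Rev s n x (v t) / real s
     \<le> (\<Sum>j<n * nbits m. indicator (switch_event \<Omega> n s m eps v t j) \<alpha>)"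
proof (cases "x = x'")
  case False
  have "x \<in> auctions_grid n m" "x' \<in> auctions_grid n m" using step unfolding gftpl_step_iff by auto
  then obtain j where j: "j < n * nbits m" "GammaVCG n m x j \<noteq> GammaVCG n m x' j"
    using grid_eq_if_GammaVCG_eq[OF m] False by blast
  have "\<alpha> \<in> switch_event \<Omega> n s m eps v t j"
    by (rule bit_switch_in_switch_event[OF v s t step j \<Omega>])
  moreover have "indicator (switch_event \<Omega> n s m eps v t j) \<alpha>
      \<le> (\<Sum>j<n * nbits m. indicator (switch_event \<Omega> n s m eps v t j) \<alpha> :: real)"
    using j(1) by (intro member_le_sum) auto
  ultimately have "1 \<le> (\<Sum>j<n * nbits m. indicator (switch_event \<Omega> n s m eps v t j) \<alpha> :: real)"
    by simp
  thus ?thesis using payoff_in_unit_interval[OF v s, of x] payoff_in_unit_interval[OF v s, of x']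
    by linarith
qed (simp add: sum_nonneg)

lemma perturb_bounds:
  assumes "\<forall>k<n * nbits m. 0 \<le> \<alpha> k \<and> \<alpha> k \<le> B"
  shows "0 \<le> perturb n m \<alpha> x" "perturb n m \<alpha> x \<le> real (n * nbits m) * B"
proof -
  have Gamma: "0 \<le> GammaVCG n m x k" "GammaVCG n m x k \<le> 1" for k
    using GammaVCG_cases[of n m x k] by auto
  show "0 \<le> perturb n m \<alpha> x" unfolding perturb_def using assms Gamma by (intro sum_nonneg) auto
  have "perturb n m \<alpha> x \<le> (\<Sum>k<n * nbits m. B)" unfolding perturb_def
    using assms Gamma by (intro sum_mono) (meson lessThan_iff mult_left_le order_trans)
  thus "perturb n m \<alpha> x \<le> real (n * nbits m) * B" by simp
qed

lemma grid_payoff_le_switches: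
  assumes v: "\<forall>t\<in>{1..T}. \<forall>i<n. 0 \<le> v t i \<and> v t i \<le> 1" and s: "1 \<le> s" and m: "1 \<le> m"
    and T: "1 \<le> T" and step: "\<forall>t\<in>{1..T}. gftpl_step n s m eps v \<alpha> t (X t)"
    and \<alpha>: "\<forall>k<n * nbits m. 0 \<le> \<alpha> k \<and> \<alpha> k \<le> B" and \<Omega>: "\<alpha> \<in> \<Omega>"
    and x: "x \<in> auctions_grid n m"
  shows "(\<Sum>t=1..T. Rev s n x (v t)) \<le> (\<Sum>t=1..T. Rev s n (X t) (v t))
     + real s * (1 + real (n * nbits m) * B + eps * real T
        + (\<Sum>t\<in>{1..<T}. \<Sum>j<n * nbits m. indicator (switch_event \<Omega> n s m eps v t j) \<alpha>))"
proof -
  let ?f = "\<lambda>y t. Rev s n y (v t) / real s"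
  let ?switches = "\<lambda>t. \<Sum>j<n * nbits m. indicator (switch_event \<Omega> n s m eps v t j) \<alpha> :: real"
  have s_pos: "0 < real s" using s by simp
  have vt: "\<forall>i<n. 0 \<le> v t i \<and> v t i \<le> 1" if "t \<in> {1..T}" for t using v that by auto
  have "cum_payoff s n v T x + perturb n m \<alpha> x
      \<le> (\<Sum>t\<in>{1..<T}. ?f (X (Suc t)) t) + perturb n m \<alpha> (X 1) + eps * real T"
    by (rule be_the_leader[OF step T order.refl x])
  hence "cum_payoff s n v T x \<le> (\<Sum>t\<in>{1..<T}. ?f (X (Suc t)) t) + real (n * nbits m) * B + eps * real T"
    using perturb_bounds[OF \<alpha>, of x] perturb_bounds[OF \<alpha>, of "X 1"] by linarith
  also have "(\<Sum>t\<in>{1..<T}. ?f (X (Suc t)) t) \<le> (\<Sum>t\<in>{1..<T}. ?f (X t) t + ?switches t)"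
  proof (rule sum_mono)
    fix t assume t: "t \<in> {1..<T}"
    hence "\<forall>i<n. 0 \<le> v t i \<and> v t i \<le> 1" "1 \<le> t"
      "gftpl_step n s m eps v \<alpha> t (X t)" "gftpl_step n s m eps v \<alpha> (Suc t) (X (Suc t))"
      using v step by auto
    from payoff_gain_le_switches[OF this(1) s m this(2-4) \<Omega>]
    show "?f (X (Suc t)) t \<le> ?f (X t) t + ?switches t" by simp
  qed
  finally have "cum_payoff s n v T x \<le> (\<Sum>t\<in>{1..<T}. ?f (X t) t)
      + (real (n * nbits m) * B + eps * real T + (\<Sum>t\<in>{1..<T}. ?switches t))"
    by (simp add: sum.distrib)
  from mult_left_mono[OF this, of "real s"]
  have cum: "real s * cum_payoff s n v T x \<le> real s * (\<Sum>t\<in>{1..<T}. ?f (X t) t)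
      + real s * (real (n * nbits m) * B + eps * real T + (\<Sum>t\<in>{1..<T}. ?switches t))"
    by (simp add: distrib_left)
  have "(\<Sum>t=1..T. Rev s n x (v t)) = real s * cum_payoff s n v T x + Rev s n x (v T)"
    using T s_pos unfolding cum_payoff_def
    by (simp add: sum_distrib_left atLeastLessThanSuc_atLeastAtMost[symmetric]
        sum.atLeastLessThan_Suc del: Suc_pred' split: nat_diff_split)
  also have "Rev s n x (v T) \<le> real s" using Rev_bounds(2)[OF vt] T by auto
  also have "real s * (\<Sum>t\<in>{1..<T}. ?f (X t) t) \<le> (\<Sum>t=1..T. Rev s n (X t) (v t))"
    using s_pos Rev_bounds(1)[OF vt] by (simp add: sum_distrib_left) (intro sum_mono2; auto)
  ultimately show ?thesis using cum by (simp add: algebra_simps)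
qed

lemma regret_le_switches:
  assumes v: "\<forall>t\<in>{1..T}. \<forall>i<n. 0 \<le> v t i \<and> v t i \<le> 1" and s: "1 \<le> s" and m: "1 \<le> m"
    and T: "1 \<le> T" and step: "\<forall>t\<in>{1..T}. gftpl_step n s m eps v \<alpha> t (X t)"
    and \<alpha>: "\<forall>k<n * nbits m. 0 \<le> \<alpha> k \<and> \<alpha> k \<le> B" and \<Omega>: "\<alpha> \<in> \<Omega>"
  shows "regret n s T v X \<le> real T * real s / real m + real s * (1 + real (n * nbits m) * B + eps * real T)
     + real s * (\<Sum>t\<in>{1..<T}. \<Sum>j<n * nbits m. indicator (switch_event \<Omega> n s m eps v t j) \<alpha>)"
proof -
  have "(\<lambda>_. 0) \<in> auctions n" unfolding auctions_def by auto
  hence ne: "auctions n \<noteq> {}" by blast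
  have "(SUP r\<in>auctions n. \<Sum>t=1..T. Rev s n r (v t))
      \<le> real T * real s / real m + (\<Sum>t=1..T. Rev s n (X t) (v t))
        + real s * (1 + real (n * nbits m) * B + eps * real T
          + (\<Sum>t\<in>{1..<T}. \<Sum>j<n * nbits m. indicator (switch_event \<Omega> n s m eps v t j) \<alpha>))"
    (is "_ \<le> ?bound")
  proof (rule cSUP_least[OF ne])
    fix r assume r: "r \<in> auctions n"
    have "(\<Sum>t=1..T. Rev s n r (v t)) \<le> (\<Sum>t=1..T. Rev s n (grid_round m n r) (v t) + real s / real m)"
      using Rev_le_Rev_grid_round[OF m r] v by (intro sum_mono) auto
    also have "\<dots> = (\<Sum>t=1..T. Rev s n (grid_round m n r) (v t)) + real T * real s / real m"
      by (simp add: sum.distrib)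
    finally show "(\<Sum>t=1..T. Rev s n r (v t)) \<le> ?bound"
      using grid_payoff_le_switches[OF v s m T step \<alpha> \<Omega> grid_round_in_grid[OF m r]] by linarith
  qed
  thus ?thesis unfolding regret_def by (simp add: algebra_simps)
qed

section \<open>Probability of a bit switch\<close>

lemma prob_space_alpha_measure: "0 < eta \<Longrightarrow> prob_space (alpha_measure N eta)"
  unfolding alpha_measure_def by (intro prob_space_PiM prob_space_uniform_measure) auto

lemma measurable_alpha_component:
  assumes "j < N" shows "(\<lambda>\<alpha>. \<alpha> j) \<in> borel_measurable (alpha_measure N eta)"
proof -
  have "(\<lambda>\<alpha>. \<alpha> j) \<in> measurable (alpha_measure N eta) (uniform_measure lborel {0..1/eta})"
    unfolding alpha_measure_def using measurable_component_singleton[of j "{..<N}"] assms by auto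
  thus ?thesis by (subst measurable_cong_sets[OF refl, where N'="uniform_measure lborel {0..1/eta}"]) auto
qed

lemma measurable_bit_threshold:
  "(\<lambda>\<alpha>. bit_threshold n s m v t j \<alpha>) \<in> borel_measurable (alpha_measure (n * nbits m) eta)"
proof -
  have "finite (bit_class n m j b)" for b
    unfolding bit_class_def using finite_auctions_grid by auto
  moreover have "(\<lambda>\<alpha>. payoff_without_bit n s m v t j \<alpha> x) \<in> borel_measurable (alpha_measure (n * nbits m) eta)"
    for x unfolding payoff_without_bit_def using measurable_alpha_component
    by (intro borel_measurable_add borel_measurable_sum borel_measurable_times) auto
  ultimately show ?thesis unfolding bit_threshold_def
    by (intro borel_measurable_diff borel_measurable_Max) auto
qed

lemma switch_event_sets:
  assumes j: "j < n * nbits m"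
  shows "switch_event (space (alpha_measure (n * nbits m) eta)) n s m eps v t j
    \<in> sets (alpha_measure (n * nbits m) eta)"
proof (cases "bit_class n m j 0 \<noteq> {} \<and> bit_class n m j 1 \<noteq> {}")
  case True
  hence event: "switch_event (space (alpha_measure (n * nbits m) eta)) n s m eps v t j =
     {\<alpha> \<in> space (alpha_measure (n * nbits m) eta). \<bar>\<alpha> j - bit_threshold n s m v t j \<alpha>\<bar> \<le> 1 + eps}"
    unfolding switch_event_def by auto
  show ?thesis unfolding event using measurable_alpha_component[OF j] measurable_bit_threshold
    by (intro borel_measurable_le borel_measurable_abs borel_measurable_diff) auto
qed (auto simp: switch_event_def)

lemma bit_threshold_upd: "bit_threshold n s m v t j (\<alpha>(j := y)) = bit_threshold n s m v t j \<alpha>"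
proof -
  have "payoff_without_bit n s m v t j (\<alpha>(j := y)) = payoff_without_bit n s m v t j \<alpha>"
    unfolding payoff_without_bit_def by (intro ext arg_cong2[where f="(+)"] refl sum.cong) auto
  thus ?thesis unfolding bit_threshold_def by simp
qed

lemma emeasure_uniform_interval_le:
  assumes eta: "0 < eta" and w: "0 \<le> w"
  shows "emeasure (uniform_measure lborel {0..1/eta}) {c - w..c + w} \<le> ennreal (2 * w * eta)"
proof -
  have "emeasure (uniform_measure lborel {0..1/eta}) {c - w..c + w}
      = emeasure lborel ({0..1/eta} \<inter> {c - w..c + w}) / emeasure lborel {0..1/eta::real}"
    by (rule emeasure_uniform_measure) auto
  also have "\<dots> \<le> emeasure lborel {c - w..c + w} / emeasure lborel {0..1/eta::real}"
    by (intro divide_right_mono_ennreal emeasure_mono) auto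
  also have "\<dots> = ennreal (2 * w) / ennreal (1 / eta)" using w eta by simp
  also have "\<dots> = ennreal (2 * w * eta)" using w eta by (subst divide_ennreal) auto
  finally show ?thesis .
qed

text \<open>Integrate out \<open>\<alpha>\<^sub>j\<close> first: the threshold does not depend on it, so the event is an
  interval of length \<open>2(1 + \<epsilon>)\<close> for \<open>\<alpha>\<^sub>j\<close>.\<close>
lemma emeasure_switch_event_le:
  assumes eta: "0 < eta" and eps: "0 \<le> eps" and j: "j < n * nbits m"
  shows "emeasure (alpha_measure (n * nbits m) eta)
      (switch_event (space (alpha_measure (n * nbits m) eta)) n s m eps v t j)
     \<le> ennreal (2 * (1 + eps) * eta)"
proof -
  define N where "N = n * nbits m"
  define U where "U = uniform_measure lborel {0..1/eta}"
  define I where "I = {..<N} - {j}"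
  define E where "E = switch_event (space (alpha_measure N eta)) n s m eps v t j"
  interpret U: prob_space U unfolding U_def using eta by (intro prob_space_uniform_measure) auto
  interpret P: product_sigma_finite "\<lambda>_. U"
    unfolding product_sigma_finite_def using U.sigma_finite_measure_axioms by simp
  interpret P': prob_space "PiM I (\<lambda>_. U)" by (intro prob_space_PiM) (rule U.prob_space_axioms)
  have M: "alpha_measure N eta = PiM (insert j I) (\<lambda>_. U)"
    unfolding alpha_measure_def U_def I_def using j N_def by (simp add: insert_absorb)
  have E: "E \<in> sets (alpha_measure N eta)" unfolding E_def N_def by (rule switch_event_sets[OF j])
  have "emeasure (alpha_measure N eta) E = (\<integral>\<^sup>+ \<alpha>. indicator E \<alpha> \<partial>(alpha_measure N eta))"
    using E by simp
  also have "\<dots> = (\<integral>\<^sup>+ \<alpha>. (\<integral>\<^sup>+ y. indicator E (\<alpha>(j := y)) \<partial>U) \<partial>(PiM I (\<lambda>_. U)))"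
    unfolding M by (rule P.product_nn_integral_insert) (use E M in \<open>auto simp: I_def\<close>)
  also have "\<dots> \<le> (\<integral>\<^sup>+ \<alpha>. ennreal (2 * (1 + eps) * eta) \<partial>(PiM I (\<lambda>_. U)))"
  proof (rule nn_integral_mono)
    fix \<alpha>
    let ?c = "bit_threshold n s m v t j \<alpha>"
    have "(\<integral>\<^sup>+ y. indicator E (\<alpha>(j := y)) \<partial>U) \<le> (\<integral>\<^sup>+ y. indicator {?c - (1 + eps)..?c + (1 + eps)} y \<partial>U)"
      by (intro nn_integral_mono)
        (auto simp: E_def switch_event_def abs_le_iff bit_threshold_upd indicator_def)
    also have "\<dots> = emeasure U {?c - (1 + eps)..?c + (1 + eps)}"
      by (rule nn_integral_indicator) (simp add: U_def)
    also have "\<dots> \<le> ennreal (2 * (1 + eps) * eta)"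
      unfolding U_def using emeasure_uniform_interval_le[OF eta, of "1 + eps"] eps by simp
    finally show "(\<integral>\<^sup>+ y. indicator E (\<alpha>(j := y)) \<partial>U) \<le> ennreal (2 * (1 + eps) * eta)" .
  qed
  also have "\<dots> = ennreal (2 * (1 + eps) * eta)" using P'.emeasure_space_1 by simp
  finally show ?thesis unfolding E_def N_def .
qed

lemma alpha_bounded_AE:
  assumes "0 < eta" shows "AE \<alpha> in alpha_measure N eta. \<forall>k<N. 0 \<le> \<alpha> k \<and> \<alpha> k \<le> 1 / eta"
proof -
  have "AE \<alpha> in alpha_measure N eta. \<forall>k\<in>{..<N}. 0 \<le> \<alpha> k \<and> \<alpha> k \<le> 1 / eta"
  proof (rule AE_finite_allI)
    fix k assume k: "k \<in> {..<N}"
    have "AE x in uniform_measure lborel {0..1/eta}. 0 \<le> x \<and> x \<le> 1 / eta"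
      using assms by (subst AE_uniform_measure) (auto intro!: AE_I2)
    thus "AE \<alpha> in alpha_measure N eta. 0 \<le> \<alpha> k \<and> \<alpha> k \<le> 1 / eta"
      unfolding alpha_measure_def using k assms
      by (intro AE_PiM_component[where P="\<lambda>x. 0 \<le> x \<and> x \<le> 1 / eta"] prob_space_uniform_measure) auto
  qed simp
  thus ?thesis by (rule eventually_mono) auto
qed

lemma (in prob_space) expectation_sum_indicator_le:
  assumes "finite I" "\<And>i. i \<in> I \<Longrightarrow> A i \<in> events" "\<And>i. i \<in> I \<Longrightarrow> prob (A i) \<le> p"
  shows "expectation (\<lambda>x. \<Sum>i\<in>I. indicator (A i) x) \<le> real (card I) * p"
proof -
  have "expectation (\<lambda>x. \<Sum>i\<in>I. indicator (A i) x) = (\<Sum>i\<in>I. prob (A i))"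
    using assms by (subst Bochner_Integration.integral_sum)
      (auto simp: emeasure_eq_measure sets.Int_space_eq2 intro!: integrable_real_indicator)
  also have "\<dots> \<le> (\<Sum>i\<in>I. p)" using assms by (intro sum_mono) auto
  finally show ?thesis by simp
qed

section \<open>Expected regret\<close>

lemma (in finite_measure) integrable_regret:
  assumes v: "\<forall>t\<in>{1..T}. \<forall>i<n. 0 \<le> v t i \<and> v t i \<le> 1"
    and meas: "\<forall>t\<in>{1..T}. (\<lambda>\<alpha>. Rev s n (play \<alpha> t) (v t)) \<in> borel_measurable M"
  shows "integrable M (\<lambda>\<alpha>. regret n s T v (play \<alpha>))"
proof -
  have "integrable M (\<lambda>\<alpha>. Rev s n (play \<alpha> t) (v t))" if "t \<in> {1..T}" for t
    using meas that Rev_bounds[of n "v t" s] v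
    by (intro integrable_const_bound[where B="real s"]) auto
  thus ?thesis unfolding regret_def by (intro Bochner_Integration.integrable_diff integrable_const
      Bochner_Integration.integrable_sum) auto
qed

lemma expected_regret_le:
  fixes n s m T :: nat and eps eta :: real and v :: "nat \<Rightarrow> nat \<Rightarrow> real"
    and play :: "(nat \<Rightarrow> real) \<Rightarrow> nat \<Rightarrow> nat \<Rightarrow> real"
  defines "N \<equiv> n * nbits m"
  defines "M \<equiv> alpha_measure N eta"
  assumes v: "\<forall>t\<in>{1..T}. \<forall>i<n. 0 \<le> v t i \<and> v t i \<le> 1" and s: "1 \<le> s" and m: "1 \<le> m"
    and T: "1 \<le> T" and eps: "0 \<le> eps" and eta: "0 < eta"
    and step: "\<forall>\<alpha>\<in>space M. \<forall>t\<in>{1..T}. gftpl_step n s m eps v \<alpha> t (play \<alpha> t)"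
    and meas: "\<forall>t\<in>{1..T}. (\<lambda>\<alpha>. Rev s n (play \<alpha> t) (v t)) \<in> borel_measurable M"
  shows "(\<integral>\<alpha>. regret n s T v (play \<alpha>) \<partial>M)
    \<le> real T * real s / real m + real s * (1 + real N / eta + eps * real T)
      + real s * (real T * real N * (2 * (1 + eps) * eta))"
proof -
  interpret prob_space M unfolding M_def using eta by (rule prob_space_alpha_measure)
  define K where "K = real T * real s / real m + real s * (1 + real N / eta + eps * real T)"
  define E where "E tj = switch_event (space M) n s m eps v (fst tj) (snd tj)" for tj
  define switches where "switches \<alpha> = (\<Sum>tj\<in>{1..<T} \<times> {..<N}. indicator (E tj) \<alpha> :: real)" for \<alpha>
  have events: "E tj \<in> events" if "tj \<in> {1..<T} \<times> {..<N}" for tj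
    using that switch_event_sets unfolding E_def M_def N_def by auto
  have prob: "prob (E tj) \<le> 2 * (1 + eps) * eta" if mem: "tj \<in> {1..<T} \<times> {..<N}" for tj
  proof -
    have "emeasure M (E tj) \<le> ennreal (2 * (1 + eps) * eta)"
      using emeasure_switch_event_le[OF eta eps] mem unfolding E_def M_def N_def by auto
    thus ?thesis using eps eta by (simp add: emeasure_eq_measure ennreal_le_iff)
  qed
  have "AE \<alpha> in M. regret n s T v (play \<alpha>) \<le> K + real s * switches \<alpha>"
    using alpha_bounded_AE[OF eta, of N] unfolding M_def[symmetric]
  proof (rule AE_mp[OF _ AE_I2], intro impI)
    fix \<alpha> assume \<alpha>: "\<alpha> \<in> space M" "\<forall>k<N. 0 \<le> \<alpha> k \<and> \<alpha> k \<le> 1 / eta"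
    have "\<forall>t\<in>{1..T}. gftpl_step n s m eps v \<alpha> t (play \<alpha> t)" using step \<alpha>(1) by blast
    from regret_le_switches[OF v s m T this \<alpha>(2)[unfolded N_def] \<alpha>(1)]
    show "regret n s T v (play \<alpha>) \<le> K + real s * switches \<alpha>"
      unfolding K_def switches_def E_def N_def
      by (simp add: sum.cartesian_product split_def algebra_simps)
  qed
  moreover have switches: "integrable M switches"
    unfolding switches_def using events
    by (intro Bochner_Integration.integrable_sum integrable_real_indicator) (auto simp: emeasure_eq_measure)
  ultimately have "(\<integral>\<alpha>. regret n s T v (play \<alpha>) \<partial>M) \<le> (\<integral>\<alpha>. K + real s * switches \<alpha> \<partial>M)"
    using integrable_regret[OF v meas] by (intro integral_mono_AE) auto
  also have "\<dots> = K + real s * expectation switches"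
    using switches by (simp add: prob_space)
  also have "expectation switches \<le> real (card ({1..<T} \<times> {..<N})) * (2 * (1 + eps) * eta)"
    unfolding switches_def using events prob by (intro expectation_sum_indicator_le) auto
  also have "\<dots> \<le> real T * real N * (2 * (1 + eps) * eta)"
    using eps eta by (intro mult_right_mono) (auto simp: card_cartesian_product mult_right_mono)
  finally show ?thesis unfolding K_def by (simp add: mult_left_mono s)
qed

section \<open>The choice of parameters\<close>

lemma nbits_sqrt_bounds:
  assumes T: "2 \<le> T"
  shows "1 \<le> nbits (nat \<lceil>sqrt (real T)\<rceil>)" "real (nbits (nat \<lceil>sqrt (real T)\<rceil>)) \<le> 4 * ln (real T)"
proof -
  define q where "q = sqrt (real T)"
  define m where "m = nat \<lceil>q\<rceil>"
  have q: "sqrt 2 \<le> q" unfolding q_def using T by simp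
  have "1 < sqrt (2::real)" by simp
  hence m: "q \<le> real m" "real m < q + 1" "2 \<le> m" unfolding m_def using q by linarith+
  have log_m: "1 \<le> log 2 (real m)" using m by simp
  thus "1 \<le> nbits (nat \<lceil>sqrt (real T)\<rceil>)" unfolding nbits_def m_def q_def by linarith
  have "real (nbits m) \<le> log 2 (real m) + 1" unfolding nbits_def using log_m by linarith
  also have "log 2 (real m) \<le> log 2 (2 * q)"
  proof -
    have "0 < q" "real m \<le> 2 * q" using m q \<open>1 < sqrt 2\<close> by linarith+
    thus ?thesis using m by (subst log_le_cancel_iff) auto
  qed
  also have "log 2 (2 * q) = 1 + ln (real T) / (2 * ln 2)"
  proof -
    have "0 < q" using q \<open>1 < sqrt 2\<close> by linarith
    hence "log 2 (2 * q) = 1 + log 2 q" by (simp add: log_mult)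
    moreover have "log 2 q = ln (real T) / (2 * ln 2)"
      unfolding q_def log_def using T by (simp add: ln_sqrt)
    ultimately show ?thesis by simp
  qed
  also have "ln (real T) / (2 * ln 2) \<le> ln (real T) / (2 * (2/3))"
    using ln2_ge_two_thirds T by (intro divide_left_mono) auto
  finally have "real (nbits m) \<le> 2 + 3/4 * ln (real T)" by simp
  moreover have "ln 2 \<le> ln (real T)" using T by simp
  hence "2/3 \<le> ln (real T)" using ln2_ge_two_thirds by linarith
  ultimately show "real (nbits (nat \<lceil>sqrt (real T)\<rceil>)) \<le> 4 * ln (real T)"
    unfolding m_def q_def by linarith
qed

lemma parameter_bounds:
  fixes T :: nat
  assumes T: "2 \<le> T"
  defines "q \<equiv> sqrt (real T)"
  defines "m \<equiv> nat \<lceil>q\<rceil>" and "eps \<equiv> 1 / q"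
  defines "eta \<equiv> sqrt (1 / (2 * (1 + 2 * eps) * real T))"
  shows "1 \<le> q" "1 \<le> m" "real T / real m \<le> q" "0 < eps" "eps \<le> 1" "eps * real T = q"
    "0 < eta" "1 / eta \<le> 3 * q" "real T * eta \<le> q"
proof -
  have qq: "q * q = real T" unfolding q_def by simp
  show q: "1 \<le> q" unfolding q_def using T by simp
  have mq: "q \<le> real m" unfolding m_def by linarith
  thus "1 \<le> m" using q by linarith
  have "real T / real m \<le> real T / q" using mq q by (intro divide_left_mono) auto
  also have "real T / q = q" using q by (simp add: qq[symmetric])
  finally show "real T / real m \<le> q" .
  show eps: "0 < eps" "eps \<le> 1" "eps * real T = q" unfolding eps_def using q qq by (auto simp: field_simps)
  show "0 < eta" unfolding eta_def using eps T by simp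
  have "1 / eta = sqrt (2 * (1 + 2 * eps) * real T)" unfolding eta_def using eps T
    by (simp add: real_sqrt_divide)
  also have "\<dots> \<le> sqrt (9 * real T)" using eps T by (intro real_sqrt_le_mono) auto
  also have "\<dots> = 3 * q" unfolding q_def by (simp add: real_sqrt_mult)
  finally show "1 / eta \<le> 3 * q" .
  have "eta \<le> sqrt (1 / real T)" unfolding eta_def using eps T
    by (intro real_sqrt_le_mono divide_left_mono) auto
  also have "\<dots> = 1 / q" unfolding q_def by (simp add: real_sqrt_divide)
  finally have "eta * q \<le> 1" using q by (simp add: field_simps)
  have "real T * eta = q * (eta * q)" using qq by (simp add: algebra_simps)
  also have "\<dots> \<le> q * 1" using \<open>eta * q \<le> 1\<close> q by (intro mult_left_mono) auto
  finally show "real T * eta \<le> q" by simp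
qed

lemma regret_bound_le:
  fixes T n s :: nat
  assumes T: "2 \<le> T" and n: "1 \<le> n" and s: "1 \<le> s"
  defines "q \<equiv> sqrt (real T)"
  defines "m \<equiv> nat \<lceil>q\<rceil>" and "eps \<equiv> 1 / q"
  defines "eta \<equiv> sqrt (1 / (2 * (1 + 2 * eps) * real T))"
  shows "real T * real s / real m + real s * (1 + real (n * nbits m) / eta + eps * real T)
      + real s * (real T * real (n * nbits m) * (2 * (1 + eps) * eta))
    \<le> 40 * real n * real s * ln (real T) * q"
proof -
  note p = parameter_bounds[OF T, folded q_def, folded m_def eps_def, folded eta_def]
  define N where "N = real (n * nbits m)"
  have "1 \<le> nbits m" "real (nbits m) \<le> 4 * ln (real T)"
    using nbits_sqrt_bounds[OF T] unfolding m_def q_def by auto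
  hence N: "1 \<le> N" "N \<le> 4 * real n * ln (real T)" unfolding N_def using n
    by (simp_all add: mult_le_cancel_left1 order_trans[OF _ mult_right_mono[of 1 "real n"]])
  have "1 * 1 \<le> N * q" "1 * q \<le> N * q" using N p(1) by (intro mult_mono; simp)+
  hence Nq: "1 \<le> N * q" "q \<le> N * q" by simp_all
  have "N / eta = N * (1 / eta)" by simp
  also have "\<dots> \<le> N * (3 * q)" using N p by (intro mult_left_mono) auto
  finally have N_eta: "N / eta \<le> 3 * (N * q)" by simp
  have "real T * N * (2 * (1 + eps) * eta) = (N * (2 * (1 + eps))) * (real T * eta)" by simp
  also have "\<dots> \<le> (N * 4) * q" using N p by (intro mult_mono) auto
  finally have T_eta: "real T * N * (2 * (1 + eps) * eta) \<le> 4 * (N * q)" by simp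
  have "real T * real s / real m + real s * (1 + N / eta + eps * real T)
      + real s * (real T * N * (2 * (1 + eps) * eta))
      = real s * (real T / real m + 1 + N / eta + eps * real T + real T * N * (2 * (1 + eps) * eta))"
    by (simp add: algebra_simps)
  also have "\<dots> \<le> real s * (10 * (N * q))"
  proof (rule mult_left_mono)
    show "real T / real m + 1 + N / eta + eps * real T + real T * N * (2 * (1 + eps) * eta)
        \<le> 10 * (N * q)" using p(3,6) Nq N_eta T_eta by linarith
  qed simp
  also have "\<dots> \<le> real s * (10 * (4 * real n * ln (real T) * q))"
    using N p by (intro mult_left_mono mult_right_mono) auto
  finally show ?thesis unfolding N_def by (simp add: algebra_simps)
qed

lemma gftpl_expected_regret_le:
  fixes n s T :: nat and v :: "nat \<Rightarrow> nat \<Rightarrow> real" and play :: "(nat \<Rightarrow> real) \<Rightarrow> nat \<Rightarrow> nat \<Rightarrow> real"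
  defines "m \<equiv> nat \<lceil>sqrt (real T)\<rceil>" and "eps \<equiv> 1 / sqrt (real T)"
  defines "eta \<equiv> sqrt (1 / (2 * (1 + 2 * eps) * real T))"
  defines "M \<equiv> alpha_measure (n * nbits m) eta"
  assumes n: "1 \<le> n" and s: "1 \<le> s" and T: "2 \<le> T"
    and v: "\<forall>t\<in>{1..T}. \<forall>i<n. 0 \<le> v t i \<and> v t i \<le> 1"
    and step: "\<forall>\<alpha>\<in>space M. \<forall>t\<in>{1..T}. gftpl_step n s m eps v \<alpha> t (play \<alpha> t)"
    and meas: "\<forall>t\<in>{1..T}. (\<lambda>\<alpha>. Rev s n (play \<alpha> t) (v t)) \<in> borel_measurable M"
  shows "(\<integral>\<alpha>. regret n s T v (play \<alpha>) \<partial>M) \<le> 40 * real n * real s * ln (real T) * sqrt (real T)"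
proof -
  note p = parameter_bounds[OF T, folded m_def eps_def, folded eta_def]
  have "1 \<le> T" using T by simp
  from expected_regret_le[OF v s p(2) this less_imp_le[OF p(4)] p(7), folded M_def, OF step meas]
  show ?thesis using regret_bound_le[OF T n s, folded m_def eps_def, folded eta_def] by linarith
qed

theorem theorem3p3:
  "\<exists>C::real. \<forall>(n::nat) (s::nat) (T::nat) (v::nat \<Rightarrow> nat \<Rightarrow> real)
      (play::(nat \<Rightarrow> real) \<Rightarrow> nat \<Rightarrow> nat \<Rightarrow> real).
     1 \<le> n \<longrightarrow> 1 \<le> s \<longrightarrow> 2 \<le> T \<longrightarrow>
     (\<forall>t\<in>{1..T}. \<forall>i<n. 0 \<le> v t i \<and> v t i \<le> 1) \<longrightarrow>
     (let m = nat \<lceil>sqrt (real T)\<rceil>;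
          eps = 1 / sqrt (real T);
          eta = sqrt (1 / (2 * (1 + 2 * eps) * real T));
          M = alpha_measure (n * nbits m) eta
      in (\<forall>\<alpha>\<in>space M. \<forall>t\<in>{1..T}. gftpl_step n s m eps v \<alpha> t (play \<alpha> t)) \<longrightarrow>
         (\<forall>t\<in>{1..T}. (\<lambda>\<alpha>. Rev s n (play \<alpha> t) (v t)) \<in> borel_measurable M) \<longrightarrow>
         (\<integral>\<alpha>. regret n s T v (play \<alpha>) \<partial>M)
           \<le> C * real n * real s * ln (real T) * sqrt (real T))"
  unfolding Let_def using gftpl_expected_regret_le by (intro exI[of _ 40] allI impI) blast

end
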